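(* In a non-degenerate RiFle assignment game, the set of all stable outcomes is a lattice under the partial order $\ge_P$ of $P$-preferences.
   Context: A RiFle assignment game consists of two disjoint sets of agents $P=\{p_1,\dots,p_n\}$ and $Q=\{q_1,\dots,q_n\}$, a pair of nonnegative real numbers $(\beta_{ij},\gamma_{ij})$ for every pair $(p_i,q_j)\in P\times Q$ (write $\alpha_{ij}=\beta_{ij}+\gamma_{ij}$), and a designation of every agent as rigid or flexible. Let $\mathcal R$ be the set of pairs with at least one rigid agent and $\mathcal F$ the set of pairs with both agents flexible. An outcome $(\bar u,\bar v;\mu)$ consists of a matching $\mu$ between $P$ and $Q$ (write $p_i\stackrel{\mu}{\longleftrightarrow} q_j$) and payoff vectors $\bar u,\bar v\in\mathbb R^n$. It is feasible if: (1) $u_i\ge0$, $v_j\ge0$; (2) if a rigid $p_i$ is matched to $q_j$ then $u_i=\beta_{ij}$ and, if $q_j$ is flexible, $v_j\ge\gamma_{ij}$; symmetrically for a rigid $q_j$ matched to $p_i$: $v_j=\gamma_{ij}$ and, if $p_i$ is flexible, $u_i\ge\beta_{ij}$; (3) $\sum_iu_i+\sum_jv_j=\sum_{p_i\stackrel{\mu}{\longleftrightarrow}q_j}\alpha_{ij}$. It is stable if feasible and $u_i+v_j\ge\alpha_{ij}$ for $(p_i,q_j)\in\mathcal F$ and ($u_i\ge\beta_{ij}$ or $v_j\ge\gamma_{ij}$) for $(p_i,q_j)\in\mathcal R$. Reservation prices are modeled by rigid dummy agents; for the following definition an agent left unmatched by a matching is regarded as matched to a rigid dummy agent (whose prescribed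 share $\beta$ or $\gamma$ for him is his reservation price). Given a coalition $C\subseteq P\cup Q$ and a matching $\mu$, the total payoff to $C$ under $\mu$ is forced if every pair matched under $\mu$ with one agent in $C$ and the other outside $C$ is rigid (contains a rigid agent); the forced payoff is then $\sum_{p_i\in C,\ p_i\stackrel{\mu}{\longleftrightarrow}q_j}\beta_{ij}+\sum_{q_j\in C,\ p_i\stackrel{\mu}{\longleftrightarrow}q_j}\gamma_{ij}$. The game is non-degenerate if for any two matchings $\mu,\mu'$: whenever $C$ is a minimal coalition such that the payoff to $C$ is forced under both $\mu$ and $\mu'$, and the two forced payoffs are equal, then $\mu$ and $\mu'$ coincide on $C$. For outcomes, $(\bar u,\bar v;\mu)\ge_P(\bar u',\bar v';\mu')$ means $\bar u\ge\bar u'$ and $\bar v\le\bar v'$ componentwise. *)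

theory Defs
  imports Complex_Main
begin

text \<open>Both sides P and Q are indexed by the same finite type 'n
  (p_i for i :: 'n, q_j for j :: 'n), so |P| = |Q| = n. A matching is a bijection
  mu :: 'n => 'n with p_i matched to q_(mu i). rp i / rq j say whether p_i / q_j is rigid.
  Reservation prices are modelled by rigid dummy agents, which are ordinary agents here,
  so all matchings are perfect.\<close>

definition rifle_game :: "('n::finite \<Rightarrow> 'n \<Rightarrow> real) \<Rightarrow> ('n \<Rightarrow> 'n \<Rightarrow> real) \<Rightarrow> bool" where
  "rifle_game \<beta> \<gamma> \<longleftrightarrow> (\<forall>i j. 0 \<le> \<beta> i j \<and> 0 \<le> \<gamma> i j)"

type_synonym 'n outcome = "('n \<Rightarrow> real) \<times> ('n \<Rightarrow> real) \<times> ('n \<Rightarrow> 'n)"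

definition feasible ::
  "('n::finite \<Rightarrow> 'n \<Rightarrow> real) \<Rightarrow> ('n \<Rightarrow> 'n \<Rightarrow> real) \<Rightarrow> ('n \<Rightarrow> bool) \<Rightarrow> ('n \<Rightarrow> bool)
    \<Rightarrow> 'n outcome \<Rightarrow> bool" where
  "feasible \<beta> \<gamma> rp rq x \<longleftrightarrow> (case x of (u, v, \<mu>) \<Rightarrow>
     bij \<mu> \<and>
     (\<forall>i. 0 \<le> u i) \<and> (\<forall>j. 0 \<le> v j) \<and>
     (\<forall>i. rp i \<longrightarrow> u i = \<beta> i (\<mu> i) \<and> (\<not> rq (\<mu> i) \<longrightarrow> v (\<mu> i) \<ge> \<gamma> i (\<mu> i))) \<and>
     (\<forall>i. rq (\<mu> i) \<longrightarrow> v (\<mu> i) = \<gamma> i (\<mu> i) \<and> (\<not> rp i \<longrightarrow> u i \<ge> \<beta> i (\<mu> i))) \<and>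
     (\<Sum>i\<in>UNIV. u i) + (\<Sum>j\<in>UNIV. v j) = (\<Sum>i\<in>UNIV. \<beta> i (\<mu> i) + \<gamma> i (\<mu> i)))"

definition stable ::
  "('n::finite \<Rightarrow> 'n \<Rightarrow> real) \<Rightarrow> ('n \<Rightarrow> 'n \<Rightarrow> real) \<Rightarrow> ('n \<Rightarrow> bool) \<Rightarrow> ('n \<Rightarrow> bool)
    \<Rightarrow> 'n outcome \<Rightarrow> bool" where
  "stable \<beta> \<gamma> rp rq x \<longleftrightarrow> feasible \<beta> \<gamma> rp rq x \<and> (case x of (u, v, \<mu>) \<Rightarrow>
     (\<forall>i j. \<not> rp i \<and> \<not> rq j \<longrightarrow> u i + v j \<ge> \<beta> i j + \<gamma> i j) \<and>
     (\<forall>i j. rp i \<or> rq j \<longrightarrow> u i \<ge> \<beta> i j \<or> v j \<ge> \<gamma> i j))"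

text \<open>Coalition C = (CP, CQ): CP the indices of its P-agents, CQ those of its Q-agents.\<close>

definition forced :: "('n \<Rightarrow> bool) \<Rightarrow> ('n \<Rightarrow> bool) \<Rightarrow> 'n set \<Rightarrow> 'n set \<Rightarrow> ('n \<Rightarrow> 'n) \<Rightarrow> bool" where
  "forced rp rq CP CQ \<mu> \<longleftrightarrow>
     (\<forall>i. (i \<in> CP) \<noteq> (\<mu> i \<in> CQ) \<longrightarrow> rp i \<or> rq (\<mu> i))"

definition forced_payoff ::
  "('n::finite \<Rightarrow> 'n \<Rightarrow> real) \<Rightarrow> ('n \<Rightarrow> 'n \<Rightarrow> real) \<Rightarrow> 'n set \<Rightarrow> 'n set \<Rightarrow> ('n \<Rightarrow> 'n) \<Rightarrow> real" where
  "forced_payoff \<beta> \<gamma> CP CQ \<mu> =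
     (\<Sum>i\<in>CP. \<beta> i (\<mu> i)) + (\<Sum>i\<in>{i. \<mu> i \<in> CQ}. \<gamma> i (\<mu> i))"

definition forced_both :: "('n \<Rightarrow> bool) \<Rightarrow> ('n \<Rightarrow> bool) \<Rightarrow> 'n set \<Rightarrow> 'n set \<Rightarrow> ('n \<Rightarrow> 'n) \<Rightarrow> ('n \<Rightarrow> 'n) \<Rightarrow> bool" where
  "forced_both rp rq CP CQ \<mu> \<mu>' \<longleftrightarrow> forced rp rq CP CQ \<mu> \<and> forced rp rq CP CQ \<mu>'"

definition minimal_forced ::
  "('n \<Rightarrow> bool) \<Rightarrow> ('n \<Rightarrow> bool) \<Rightarrow> 'n set \<Rightarrow> 'n set \<Rightarrow> ('n \<Rightarrow> 'n) \<Rightarrow> ('n \<Rightarrow> 'n) \<Rightarrow> bool" where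
  "minimal_forced rp rq CP CQ \<mu> \<mu>' \<longleftrightarrow>
     (CP \<noteq> {} \<or> CQ \<noteq> {}) \<and> forced_both rp rq CP CQ \<mu> \<mu>' \<and>
     (\<forall>DP DQ. DP \<subseteq> CP \<and> DQ \<subseteq> CQ \<and> (DP \<noteq> {} \<or> DQ \<noteq> {}) \<and> (DP, DQ) \<noteq> (CP, CQ)
        \<longrightarrow> \<not> forced_both rp rq DP DQ \<mu> \<mu>')"

definition non_degenerate ::
  "('n::finite \<Rightarrow> 'n \<Rightarrow> real) \<Rightarrow> ('n \<Rightarrow> 'n \<Rightarrow> real) \<Rightarrow> ('n \<Rightarrow> bool) \<Rightarrow> ('n \<Rightarrow> bool) \<Rightarrow> bool" where
  "non_degenerate \<beta> \<gamma> rp rq \<longleftrightarrow>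
     (\<forall>\<mu> \<mu>' CP CQ. bij \<mu> \<and> bij \<mu>' \<and> minimal_forced rp rq CP CQ \<mu> \<mu>' \<and>
        forced_payoff \<beta> \<gamma> CP CQ \<mu> = forced_payoff \<beta> \<gamma> CP CQ \<mu>' \<longrightarrow>
        (\<forall>i\<in>CP. \<mu> i = \<mu>' i) \<and> (\<forall>j\<in>CQ. inv \<mu> j = inv \<mu>' j))"

definition geP :: "'n outcome \<Rightarrow> 'n outcome \<Rightarrow> bool" where
  "geP x y \<longleftrightarrow> (case x of (u, v, _) \<Rightarrow> case y of (u', v', _) \<Rightarrow>
     (\<forall>i. u' i \<le> u i) \<and> (\<forall>j. v j \<le> v' j))"

definition is_lattice_under :: "'a set \<Rightarrow> ('a \<Rightarrow> 'a \<Rightarrow> bool) \<Rightarrow> bool" where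
  "is_lattice_under S ge \<longleftrightarrow>
     (\<forall>x\<in>S. \<forall>y\<in>S.
        (\<exists>z\<in>S. ge z x \<and> ge z y \<and> (\<forall>w\<in>S. ge w x \<and> ge w y \<longrightarrow> ge w z)) \<and>
        (\<exists>z\<in>S. ge x z \<and> ge y z \<and> (\<forall>w\<in>S. ge x w \<and> ge y w \<longrightarrow> ge z w)))"

end

theory Submission
  imports Defs
begin

(* Compare two stable outcomes (u, v; mu) and (u', v'; mu') through the gains
   d(p_i) = u_i - u'_i and d(q_j) = v'_j - v_j on the walk p_i -> q_(mu i) -> p_(mu'^-1 (mu i)) -> ...
   Stability of the two outcomes gives: a positive vertex is never followed by a negative one,
   and d does not decrease along a flexible step.  Non-degeneracy gives: on a set of tied vertices
   (d = 0) left and entered only through rigid steps, mu and mu' coincide, since the stable payoffs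
   of such a coalition are its forced payoffs under both matchings.  Hence no walk leads from a
   positive to a negative vertex, so the vertices from which some negative vertex is reachable form
   a set A of P-agents with mu(A) = mu'(A) on which d <= 0, while d >= 0 off A.  Matching A by mu'
   and the rest by mu supports the payoffs (max u u', min v v'); matching A by mu and the rest by
   mu' supports (min u u', max v v').  These are the join and the meet for >=_P. *)

locale sign_walk =
  fixes f :: "'c \<Rightarrow> 'c" and d :: "'c \<Rightarrow> real" and flexible :: "'c \<Rightarrow> bool"
  assumes inj: "inj f"
    and positive_step: "d c > 0 \<Longrightarrow> d (f c) \<ge> 0"
    and flexible_step: "flexible c \<Longrightarrow> d c \<le> d (f c)"
    and tied_involutive: "\<lbrakk>\<forall>c\<in>K. d c = 0; \<forall>c. (c \<in> K) \<noteq> (f c \<in> K) \<longrightarrow> \<not> flexible c; c \<in> K\<rbrakk>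
      \<Longrightarrow> f (f c) = c"
begin

lemma tied_segment_rigid_boundary:
  assumes pos: "d a > 0" and neg: "d ((f ^^ m) a) < 0"
    and tied: "\<And>k. 0 < k \<Longrightarrow> k < m \<Longrightarrow> d ((f ^^ k) a) = 0"
    and cross: "(c \<in> (\<lambda>k. (f ^^ k) a) ` {0<..<m}) \<noteq> (f c \<in> (\<lambda>k. (f ^^ k) a) ` {0<..<m})"
  shows "\<not> flexible c"
proof (cases "c \<in> (\<lambda>k. (f ^^ k) a) ` {0<..<m}")
  case True
  then obtain k where k: "0 < k" "k < m" "c = (f ^^ k) a" by auto
  have "Suc k = m"
  proof (rule ccontr)
    assume "Suc k \<noteq> m"
    with k have "f c \<in> (\<lambda>k. (f ^^ k) a) ` {0<..<m}" by (auto intro!: image_eqI[of _ _ "Suc k"])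
    with True cross show False by simp
  qed
  moreover have "f c = (f ^^ Suc k) a" using k(3) by simp
  ultimately have "d (f c) < 0" using neg by simp
  moreover have "d c = 0" using k tied by simp
  ultimately show ?thesis using flexible_step by force
next
  case False
  with cross obtain k where k: "0 < k" "k < m" "f c = (f ^^ k) a" by auto
  then obtain k' where k': "k = Suc k'" using gr0_implies_Suc by blast
  with k have c: "c = (f ^^ k') a" using inj by (simp add: inj_eq)
  have "k' = 0"
  proof (rule ccontr)
    assume "k' \<noteq> 0"
    with k k' c have "c \<in> (\<lambda>k. (f ^^ k) a) ` {0<..<m}" by auto
    with False show False ..
  qed
  with c k k' tied[of k] pos have "d (f c) < d c" by simp
  then show ?thesis using flexible_step by force
qed

lemma no_tied_bridge:
  assumes pos: "d a > 0" and neg: "d ((f ^^ m) a) < 0"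
    and tied: "\<And>k. 0 < k \<Longrightarrow> k < m \<Longrightarrow> d ((f ^^ k) a) = 0"
  shows False
proof -
  have "m \<noteq> 0" using pos neg by (cases m) auto
  moreover have "m \<noteq> 1" using neg positive_step[OF pos] by auto
  ultimately have m2: "2 \<le> m" by linarith
  define K where "K = (\<lambda>k. (f ^^ k) a) ` {0<..<m}"
  (* f is an involution on the tied segment K, which forces f (f a) = a, although f (f a) lies in K
     or is the negative end. *)
  have "\<forall>c\<in>K. d c = 0" using tied unfolding K_def by auto
  moreover have "\<forall>c. (c \<in> K) \<noteq> (f c \<in> K) \<longrightarrow> \<not> flexible c"
    using tied_segment_rigid_boundary[OF pos neg tied] unfolding K_def by blast
  ultimately have "\<forall>c\<in>K. f (f c) = c" using tied_involutive by blast
  moreover have "f a \<in> K" using m2 unfolding K_def by (auto intro!: image_eqI[of _ _ 1])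
  ultimately have "f (f (f a)) = f a" by blast
  then have "f (f a) = a" using inj by (simp add: inj_eq)
  moreover have "d ((f ^^ Suc (Suc 0)) a) \<le> 0"
    using m2 neg tied[of "Suc (Suc 0)"] by (cases "m = Suc (Suc 0)") auto
  ultimately show False using pos by simp
qed

lemma positive_walk_nonneg:
  assumes "d a > 0"
  shows "d ((f ^^ m) a) \<ge> 0"
  using assms
proof (induction m arbitrary: a rule: less_induct)
  case (less m)
  show ?case
  proof (rule ccontr)
    assume "\<not> d ((f ^^ m) a) \<ge> 0"
    then have neg: "d ((f ^^ m) a) < 0" by simp
    (* by minimality of m, all vertices strictly between a and (f ^^ m) a are tied *)
    have tied: "d ((f ^^ k) a) = 0" if k: "0 < k" "k < m" for k
    proof -
      have "d ((f ^^ k) a) \<ge> 0" using less k by blast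
      moreover have "\<not> d ((f ^^ k) a) > 0"
      proof
        assume "d ((f ^^ k) a) > 0"
        then have "d ((f ^^ (m - k)) ((f ^^ k) a)) \<ge> 0" using less.IH k by simp
        moreover have "(f ^^ (m - k)) ((f ^^ k) a) = (f ^^ (m - k + k)) a"
          by (simp add: funpow_add)
        ultimately show False using neg k by simp
      qed
      ultimately show ?thesis by simp
    qed
    show False using no_tied_bridge[OF less.prems neg tied] .
  qed
qed

definition negative_reachable :: "'c set" where
  "negative_reachable = {c. \<exists>n. d ((f ^^ n) c) < 0}"

lemma negative_reachable_backward:
  assumes "f c \<in> negative_reachable"
  shows "c \<in> negative_reachable"
proof -
  from assms obtain n where "d ((f ^^ n) (f c)) < 0" unfolding negative_reachable_def by blast
  then have "d ((f ^^ Suc n) c) < 0" by (simp only: funpow_Suc_right comp_apply)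
  then show ?thesis unfolding negative_reachable_def by blast
qed

lemma negative_reachable_nonpos:
  assumes "c \<in> negative_reachable"
  shows "d c \<le> 0"
proof (rule ccontr)
  assume "\<not> d c \<le> 0"
  then have "d ((f ^^ n) c) \<ge> 0" for n using positive_walk_nonneg by simp
  moreover obtain n where "d ((f ^^ n) c) < 0" using assms unfolding negative_reachable_def by blast
  ultimately show False by (simp add: not_less[symmetric])
qed

lemma not_negative_reachable_nonneg:
  assumes "c \<notin> negative_reachable"
  shows "d c \<ge> 0"
proof (rule ccontr)
  assume "\<not> d c \<ge> 0"
  then have "d ((f ^^ 0) c) < 0" by simp
  with assms show False unfolding negative_reachable_def by blast
qed

end

lemma bij_if_image_eq:
  assumes "bij \<mu>" "bij \<mu>'" "\<mu> ` A = \<mu>' ` A"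
  shows "bij (\<lambda>i. if i \<in> A then \<mu> i else \<mu>' i)"
proof -
  let ?\<nu> = "\<lambda>i. if i \<in> A then \<mu> i else \<mu>' i"
  have "bij_betw \<mu> A (\<mu> ` A)" using assms(1) bij_betw_subset subset_UNIV by blast
  then have "bij_betw ?\<nu> A (\<mu> ` A)" using bij_betw_cong[of A ?\<nu> \<mu> "\<mu> ` A"] by simp
  moreover have "bij_betw \<mu>' (- A) (\<mu>' ` (- A))" using assms(2) bij_betw_subset subset_UNIV by blast
  then have "bij_betw ?\<nu> (- A) (- (\<mu> ` A))"
    using bij_betw_cong[of "- A" ?\<nu> \<mu>' "\<mu>' ` (- A)"] bij_image_Compl_eq[OF assms(2)] assms(3) by simp
  ultimately have "bij_betw ?\<nu> (A \<union> - A) (\<mu> ` A \<union> - (\<mu> ` A))"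
    by (rule bij_betw_combine) blast
  then show ?thesis by simp
qed

locale matching_pair_signs =
  fixes \<mu> \<mu>' :: "'a::finite \<Rightarrow> 'b" and dP :: "'a \<Rightarrow> real" and dQ :: "'b \<Rightarrow> real"
    and flexible :: "'a \<Rightarrow> 'b \<Rightarrow> bool"
  assumes bij: "bij \<mu>" and bij': "bij \<mu>'"
    and positive_step: "dP i > 0 \<Longrightarrow> dQ (\<mu> i) \<ge> 0"
    and flexible_step: "flexible i (\<mu> i) \<Longrightarrow> dP i \<le> dQ (\<mu> i)"
    and positive_step': "dQ (\<mu>' i) > 0 \<Longrightarrow> dP i \<ge> 0"
    and flexible_step': "flexible i (\<mu>' i) \<Longrightarrow> dQ (\<mu>' i) \<le> dP i"
    and tied_agree: "\<lbrakk>\<forall>i\<in>CP. dP i = 0; \<forall>j\<in>CQ. dQ j = 0;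
      \<forall>i. (i \<in> CP) \<noteq> (\<mu> i \<in> CQ) \<longrightarrow> \<not> flexible i (\<mu> i);
      \<forall>i. (i \<in> CP) \<noteq> (\<mu>' i \<in> CQ) \<longrightarrow> \<not> flexible i (\<mu>' i)\<rbrakk>
      \<Longrightarrow> (\<forall>i\<in>CP. \<mu> i = \<mu>' i) \<and> (\<forall>j\<in>CQ. inv \<mu> j = inv \<mu>' j)"
begin

definition walk :: "'a + 'b \<Rightarrow> 'a + 'b" where
  "walk = case_sum (Inr \<circ> \<mu>) (Inl \<circ> inv \<mu>')"

definition sign :: "'a + 'b \<Rightarrow> real" where
  "sign = case_sum dP dQ"

definition flexible_edge :: "'a + 'b \<Rightarrow> bool" where
  "flexible_edge = case_sum (\<lambda>i. flexible i (\<mu> i)) (\<lambda>j. flexible (inv \<mu>' j) j)"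

lemma walk_simps [simp]:
  "walk (Inl i) = Inr (\<mu> i)" "walk (Inr j) = Inl (inv \<mu>' j)"
  by (simp_all add: walk_def)

lemma sign_simps [simp]: "sign (Inl i) = dP i" "sign (Inr j) = dQ j"
  by (simp_all add: sign_def)

lemma inv_simps [simp]:
  "inv \<mu> (\<mu> i) = i" "\<mu> (inv \<mu> j) = j" "inv \<mu>' (\<mu>' i) = i" "\<mu>' (inv \<mu>' j) = j"
  using bij bij' by (simp_all add: bij_is_inj bij_is_surj surj_f_inv_f)

sublocale sign_walk walk sign flexible_edge
proof
  show "inj walk"
  proof (rule injI)
    have "inj \<mu>" "inj (inv \<mu>')" using bij bij' by (simp_all add: bij_is_inj bij_imp_bij_inv)
    moreover fix x y assume "walk x = walk y"
    ultimately show "x = y" by (cases x; cases y) (auto simp: inj_eq)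
  qed
next
  fix c assume "sign c > 0"
  then show "sign (walk c) \<ge> 0"
    using positive_step positive_step'[of "inv \<mu>' _"] by (cases c) auto
next
  fix c assume "flexible_edge c"
  then show "sign c \<le> sign (walk c)"
    using flexible_step flexible_step'[of "inv \<mu>' _"]
    by (cases c) (auto simp: flexible_edge_def)
next
  fix K c
  assume tied: "\<forall>c\<in>K. sign c = 0"
    and closed: "\<forall>c. (c \<in> K) \<noteq> (walk c \<in> K) \<longrightarrow> \<not> flexible_edge c"
    and "c \<in> K"
  define CP where "CP = Inl -` K"
  define CQ where "CQ = Inr -` K"
  have "\<forall>i. (i \<in> CP) \<noteq> (\<mu> i \<in> CQ) \<longrightarrow> \<not> flexible i (\<mu> i)"
    using closed[rule_format, of "Inl _"] by (auto simp: CP_def CQ_def flexible_edge_def)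
  moreover have "\<forall>i. (i \<in> CP) \<noteq> (\<mu>' i \<in> CQ) \<longrightarrow> \<not> flexible i (\<mu>' i)"
    using closed[rule_format, of "Inr (\<mu>' _)"] by (auto simp: CP_def CQ_def flexible_edge_def)
  ultimately have agree: "(\<forall>i\<in>CP. \<mu> i = \<mu>' i) \<and> (\<forall>j\<in>CQ. inv \<mu> j = inv \<mu>' j)"
    using tied by (intro tied_agree) (auto simp: CP_def CQ_def)
  show "walk (walk c) = c"
  proof (cases c)
    case (Inl i)
    with agree \<open>c \<in> K\<close> have "\<mu>' i = \<mu> i" by (simp add: CP_def)
    with Inl show ?thesis by (metis inv_simps(3) walk_simps)
  next
    case (Inr j)
    with agree \<open>c \<in> K\<close> have "inv \<mu>' j = inv \<mu> j" by (simp add: CQ_def)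
    with Inr show ?thesis by (metis inv_simps(2) walk_simps)
  qed
qed

lemma sign_separating_set:
  obtains A where "\<mu> ` A = \<mu>' ` A"
    and "\<forall>i\<in>A. dP i \<le> 0" and "\<forall>j\<in>\<mu> ` A. dQ j \<le> 0"
    and "\<forall>i\<in>- A. dP i \<ge> 0" and "\<forall>j\<in>- (\<mu> ` A). dQ j \<ge> 0"
proof -
  let ?N = negative_reachable
  define A where "A = {i. Inl i \<in> ?N}"
  have P_to_Q: "\<mu>' ` A \<subseteq> {j. Inr j \<in> ?N}"
  proof (rule image_subsetI)
    fix i assume "i \<in> A"
    then have "walk (Inr (\<mu>' i)) \<in> ?N" by (simp add: A_def)
    then show "\<mu>' i \<in> {j. Inr j \<in> ?N}" using negative_reachable_backward by simp
  qed
  have Q_to_P: "{j. Inr j \<in> ?N} \<subseteq> \<mu> ` A"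
  proof
    fix j assume "j \<in> {j. Inr j \<in> ?N}"
    then have "walk (Inl (inv \<mu> j)) \<in> ?N" by simp
    then have "inv \<mu> j \<in> A" using negative_reachable_backward by (simp add: A_def)
    then show "j \<in> \<mu> ` A" by (metis image_eqI inv_simps(2))
  qed
  have "inj_on \<mu> A" "inj_on \<mu>' A"
    using bij bij' by (meson bij_betw_imp_inj_on inj_on_subset subset_UNIV)+
  then have "card (\<mu>' ` A) = card (\<mu> ` A)" by (simp add: card_image)
  then have image_eq: "\<mu>' ` A = \<mu> ` A" using P_to_Q Q_to_P by (intro card_subset_eq) auto
  then have Q_part: "\<mu> ` A = {j. Inr j \<in> ?N}" using P_to_Q Q_to_P by auto
  show thesis
  proof
    show "\<mu> ` A = \<mu>' ` A" by (rule image_eq[symmetric])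
    show "\<forall>i\<in>A. dP i \<le> 0" "\<forall>i\<in>- A. dP i \<ge> 0"
      using negative_reachable_nonpos[of "Inl _"] not_negative_reachable_nonneg[of "Inl _"] by (simp_all add: A_def)
    show "\<forall>j\<in>\<mu> ` A. dQ j \<le> 0" "\<forall>j\<in>- (\<mu> ` A). dQ j \<ge> 0"
      using negative_reachable_nonpos[of "Inr _"] not_negative_reachable_nonneg[of "Inr _"] by (simp_all add: Q_part)
  qed
qed

end

lemma stable_bij: "stable \<beta> \<gamma> rp rq (u, v, \<mu>) \<Longrightarrow> bij \<mu>"
  by (simp add: stable_def feasible_def)

lemma stable_matched_pair:
  fixes \<beta> \<gamma> :: "'n::finite \<Rightarrow> 'n \<Rightarrow> real"
  assumes "stable \<beta> \<gamma> rp rq (u, v, \<mu>)"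
  shows "u i + v (\<mu> i) = \<beta> i (\<mu> i) + \<gamma> i (\<mu> i)"
    and "rp i \<or> rq (\<mu> i) \<Longrightarrow> u i = \<beta> i (\<mu> i) \<and> v (\<mu> i) = \<gamma> i (\<mu> i)"
proof -
  from assms have bij: "bij \<mu>"
    and rigid_P: "\<forall>i. rp i \<longrightarrow> u i = \<beta> i (\<mu> i) \<and> (\<not> rq (\<mu> i) \<longrightarrow> v (\<mu> i) \<ge> \<gamma> i (\<mu> i))"
    and rigid_Q: "\<forall>i. rq (\<mu> i) \<longrightarrow> v (\<mu> i) = \<gamma> i (\<mu> i) \<and> (\<not> rp i \<longrightarrow> u i \<ge> \<beta> i (\<mu> i))"
    and total: "(\<Sum>i\<in>UNIV. u i) + (\<Sum>j\<in>UNIV. v j) = (\<Sum>i\<in>UNIV. \<beta> i (\<mu> i) + \<gamma> i (\<mu> i))"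
    and flexible: "\<forall>i j. \<not> rp i \<and> \<not> rq j \<longrightarrow> u i + v j \<ge> \<beta> i j + \<gamma> i j"
    by (simp_all add: stable_def feasible_def)
  have surplus_nonneg: "u k + v (\<mu> k) - (\<beta> k (\<mu> k) + \<gamma> k (\<mu> k)) \<ge> 0" for k
    using rigid_P[rule_format, of k] rigid_Q[rule_format, of k] flexible[rule_format, of k "\<mu> k"]
    by (cases "rp k"; cases "rq (\<mu> k)") auto
  have "(\<Sum>j\<in>UNIV. v j) = (\<Sum>i\<in>UNIV. v (\<mu> i))"
    using sum.reindex_bij_betw[OF bij, of v] by simp
  with total have "(\<Sum>k\<in>UNIV. u k + v (\<mu> k) - (\<beta> k (\<mu> k) + \<gamma> k (\<mu> k))) = 0"
    by (simp add: sum.distrib sum_subtractf)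
  then have "\<forall>k\<in>UNIV. u k + v (\<mu> k) - (\<beta> k (\<mu> k) + \<gamma> k (\<mu> k)) = 0"
    by (subst (asm) sum_nonneg_eq_0_iff) (use surplus_nonneg in auto)
  then show tight: "u i + v (\<mu> i) = \<beta> i (\<mu> i) + \<gamma> i (\<mu> i)" by simp
  show "rp i \<or> rq (\<mu> i) \<Longrightarrow> u i = \<beta> i (\<mu> i) \<and> v (\<mu> i) = \<gamma> i (\<mu> i)"
    using rigid_P[rule_format, of i] rigid_Q[rule_format, of i] tight by auto
qed

lemma forced_payoff_eq_sum:
  fixes \<beta> \<gamma> :: "'n::finite \<Rightarrow> 'n \<Rightarrow> real"
  assumes st: "stable \<beta> \<gamma> rp rq (u, v, \<mu>)" and forced: "forced rp rq CP CQ \<mu>"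
  shows "forced_payoff \<beta> \<gamma> CP CQ \<mu> = sum u CP + sum v CQ"
proof -
  define E where "E = {i. \<mu> i \<in> CQ}"
  define a where "a i = u i - \<beta> i (\<mu> i)" for i
  have "bij \<mu>" using st by (rule stable_bij)
  then have "inj_on \<mu> E" "\<mu> ` E = CQ"
    by (meson bij_betw_imp_inj_on inj_on_subset subset_UNIV)
      (simp add: E_def vimage_def[symmetric] surj_image_vimage_eq bij_is_surj[OF \<open>bij \<mu>\<close>])
  then have reindex: "sum v CQ = (\<Sum>i\<in>E. v (\<mu> i))" using sum.reindex[of \<mu> E v] by simp
  have \<beta>_split: "\<beta> i (\<mu> i) = u i - a i" for i by (simp add: a_def)
  have \<gamma>_split: "\<gamma> i (\<mu> i) = v (\<mu> i) + a i" for i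
    using stable_matched_pair(1)[OF st, of i] by (simp add: a_def)
  have "forced_payoff \<beta> \<gamma> CP CQ \<mu> = sum u CP - sum a CP + sum v CQ + sum a E"
    by (simp add: forced_payoff_def E_def[symmetric] \<beta>_split \<gamma>_split sum.distrib sum_subtractf reindex)
  moreover have "a i = 0" if "(i \<in> CP) \<noteq> (i \<in> E)" for i
    using stable_matched_pair(2)[OF st] forced that by (auto simp: forced_def a_def E_def)
  then have "sum a CP = sum a (CP \<inter> E)" "sum a E = sum a (CP \<inter> E)"
    by (auto intro!: sum.mono_neutral_right)
  ultimately show ?thesis by simp
qed

lemma forced_Diff:
  "forced rp rq CP CQ \<mu> \<Longrightarrow> forced rp rq DP DQ \<mu> \<Longrightarrow> forced rp rq (CP - DP) (CQ - DQ) \<mu>"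
  unfolding forced_def by blast

lemma minimal_forced_subcoalition:
  fixes CP CQ :: "'n::finite set"
  assumes "CP \<noteq> {} \<or> CQ \<noteq> {}" and "forced_both rp rq CP CQ \<mu> \<mu>'"
  shows "\<exists>DP\<subseteq>CP. \<exists>DQ\<subseteq>CQ. minimal_forced rp rq DP DQ \<mu> \<mu>'"
  using assms
proof (induction "card CP + card CQ" arbitrary: CP CQ rule: less_induct)
  case less
  show ?case
  proof (cases "minimal_forced rp rq CP CQ \<mu> \<mu>'")
    case True
    then show ?thesis by blast
  next
    case False
    with less.prems obtain DP DQ where sub: "DP \<subseteq> CP" "DQ \<subseteq> CQ" "(DP, DQ) \<noteq> (CP, CQ)"
      and D: "DP \<noteq> {} \<or> DQ \<noteq> {}" "forced_both rp rq DP DQ \<mu> \<mu>'"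
      unfolding minimal_forced_def by blast
    from sub have "DP \<subset> CP \<or> DQ \<subset> CQ" by blast
    then have "card DP < card CP \<or> card DQ < card CQ" by (meson finite psubset_card_mono)
    moreover have "card DP \<le> card CP" "card DQ \<le> card CQ" using sub by (simp_all add: card_mono)
    ultimately have "card DP + card DQ < card CP + card CQ" by linarith
    then obtain EP EQ where "EP \<subseteq> DP" "EQ \<subseteq> DQ" "minimal_forced rp rq EP EQ \<mu> \<mu>'"
      using less.hyps[OF _ D] by blast
    with sub show ?thesis by (meson order_trans)
  qed
qed

lemma stable_agree_on_forced:
  fixes \<beta> \<gamma> :: "'n::finite \<Rightarrow> 'n \<Rightarrow> real"
  assumes nd: "non_degenerate \<beta> \<gamma> rp rq"
    and x: "stable \<beta> \<gamma> rp rq (u, v, \<mu>)" and y: "stable \<beta> \<gamma> rp rq (u', v', \<mu>')"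
    and "forced_both rp rq CP CQ \<mu> \<mu>'"
    and "\<forall>i\<in>CP. u i = u' i" and "\<forall>j\<in>CQ. v j = v' j"
  shows "(\<forall>i\<in>CP. \<mu> i = \<mu>' i) \<and> (\<forall>j\<in>CQ. inv \<mu> j = inv \<mu>' j)"
  using assms(4-)
proof (induction "card CP + card CQ" arbitrary: CP CQ rule: less_induct)
  case less
  (* non-degeneracy applies to a minimal forced subcoalition, whose forced payoffs are its stable
     payoffs; the rest of the coalition is again forced under both matchings *)
  show ?case
  proof (cases "CP = {} \<and> CQ = {}")
    case False
    then obtain DP DQ where sub: "DP \<subseteq> CP" "DQ \<subseteq> CQ"
      and D: "minimal_forced rp rq DP DQ \<mu> \<mu>'"
      using minimal_forced_subcoalition[OF _ less.prems(1)] by blast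
    then have forced: "forced rp rq DP DQ \<mu>" "forced rp rq DP DQ \<mu>'"
      by (simp_all add: minimal_forced_def forced_both_def)
    have "forced_payoff \<beta> \<gamma> DP DQ \<mu> = sum u DP + sum v DQ"
      using forced_payoff_eq_sum[OF x forced(1)] .
    also have "\<dots> = sum u' DP + sum v' DQ"
      using less.prems(2,3) sub by (metis subsetD sum.cong)
    also have "\<dots> = forced_payoff \<beta> \<gamma> DP DQ \<mu>'"
      using forced_payoff_eq_sum[OF y forced(2)] by simp
    finally have "(\<forall>i\<in>DP. \<mu> i = \<mu>' i) \<and> (\<forall>j\<in>DQ. inv \<mu> j = inv \<mu>' j)"
      using nd stable_bij[OF x] stable_bij[OF y] D unfolding non_degenerate_def by blast
    moreover have "(\<forall>i\<in>CP - DP. \<mu> i = \<mu>' i) \<and> (\<forall>j\<in>CQ - DQ. inv \<mu> j = inv \<mu>' j)"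
    proof (rule less.hyps)
      have "card DP > 0 \<or> card DQ > 0" using D by (simp add: minimal_forced_def card_gt_0_iff)
      moreover have "card DP \<le> card CP" "card DQ \<le> card CQ" using sub by (simp_all add: card_mono)
      ultimately show "card (CP - DP) + card (CQ - DQ) < card CP + card CQ"
        using sub by (simp add: card_Diff_subset) arith
      show "forced_both rp rq (CP - DP) (CQ - DQ) \<mu> \<mu>'"
        using less.prems(1) forced by (simp add: forced_both_def forced_Diff)
    qed (use less.prems in auto)
    ultimately show ?thesis by (meson DiffI)
  qed simp
qed

lemma stable_unblocked:
  assumes "stable \<beta> \<gamma> rp rq (u, v, \<mu>)"
  shows "0 \<le> u i" and "0 \<le> v j"
    and "\<not> rp i \<Longrightarrow> \<not> rq j \<Longrightarrow> \<beta> i j + \<gamma> i j \<le> u i + v j"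
    and "rp i \<or> rq j \<Longrightarrow> \<beta> i j \<le> u i \<or> \<gamma> i j \<le> v j"
  using assms by (auto simp: stable_def feasible_def)

lemma matched_pair_no_common_gain:
  fixes \<beta> \<gamma> :: "'n::finite \<Rightarrow> 'n \<Rightarrow> real"
  assumes x: "stable \<beta> \<gamma> rp rq (u, v, \<mu>)" and y: "stable \<beta> \<gamma> rp rq (u', v', \<mu>')"
    and "u' i < u i"
  shows "v (\<mu> i) \<le> v' (\<mu> i)"
  using assms(3) stable_matched_pair[OF x, of i] stable_unblocked(3,4)[OF y, of i "\<mu> i"]
  by (cases "rp i \<or> rq (\<mu> i)") auto

lemma matched_flexible_pair_gain_le:
  fixes \<beta> \<gamma> :: "'n::finite \<Rightarrow> 'n \<Rightarrow> real"
  assumes x: "stable \<beta> \<gamma> rp rq (u, v, \<mu>)" and y: "stable \<beta> \<gamma> rp rq (u', v', \<mu>')"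
    and "\<not> rp i" "\<not> rq (\<mu> i)"
  shows "u i - u' i \<le> v' (\<mu> i) - v (\<mu> i)"
  using assms(3,4) stable_matched_pair(1)[OF x, of i] stable_unblocked(3)[OF y, of i "\<mu> i"] by simp

lemma stable_recombine:
  fixes \<beta> \<gamma> :: "'n::finite \<Rightarrow> 'n \<Rightarrow> real"
  assumes x: "stable \<beta> \<gamma> rp rq (u, v, \<mu>)" and y: "stable \<beta> \<gamma> rp rq (u', v', \<mu>')"
    and bij: "bij \<nu>"
    and dominates: "\<And>i j. (u i \<le> U i \<and> v j \<le> V j) \<or> (u' i \<le> U i \<and> v' j \<le> V j)"
    and matched: "\<And>i. (\<nu> i = \<mu> i \<and> U i = u i \<and> V (\<mu> i) = v (\<mu> i))
      \<or> (\<nu> i = \<mu>' i \<and> U i = u' i \<and> V (\<mu>' i) = v' (\<mu>' i))"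
  shows "stable \<beta> \<gamma> rp rq (U, V, \<nu>)"
proof -
  have tight: "U i + V (\<nu> i) = \<beta> i (\<nu> i) + \<gamma> i (\<nu> i)"
    and rigid: "rp i \<or> rq (\<nu> i) \<Longrightarrow> U i = \<beta> i (\<nu> i) \<and> V (\<nu> i) = \<gamma> i (\<nu> i)" for i
    using matched[of i] stable_matched_pair[OF x, of i] stable_matched_pair[OF y, of i] by auto
  have "(\<Sum>i\<in>UNIV. U i) + (\<Sum>j\<in>UNIV. V j) = (\<Sum>i\<in>UNIV. U i + V (\<nu> i))"
    using sum.reindex_bij_betw[OF bij, of V] by (simp add: sum.distrib)
  also have "\<dots> = (\<Sum>i\<in>UNIV. \<beta> i (\<nu> i) + \<gamma> i (\<nu> i))" using tight by simp
  finally have total: "(\<Sum>i\<in>UNIV. U i) + (\<Sum>j\<in>UNIV. V j) = (\<Sum>i\<in>UNIV. \<beta> i (\<nu> i) + \<gamma> i (\<nu> i))" .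
  have "0 \<le> U i" "0 \<le> V j"
    and "\<not> rp i \<and> \<not> rq j \<longrightarrow> \<beta> i j + \<gamma> i j \<le> U i + V j"
    and "rp i \<or> rq j \<longrightarrow> \<beta> i j \<le> U i \<or> \<gamma> i j \<le> V j" for i j
    using dominates[of i j] stable_unblocked(1)[OF x, of i] stable_unblocked(1)[OF y, of i]
      stable_unblocked(2)[OF x, of j] stable_unblocked(2)[OF y, of j]
      stable_unblocked(3,4)[OF x, of i j] stable_unblocked(3,4)[OF y, of i j] by auto
  with bij tight rigid total show ?thesis unfolding stable_def feasible_def by auto
qed

lemma stable_sign_separating_set:
  fixes \<beta> \<gamma> :: "'n::finite \<Rightarrow> 'n \<Rightarrow> real"
  assumes nd: "non_degenerate \<beta> \<gamma> rp rq"
    and x: "stable \<beta> \<gamma> rp rq (u, v, \<mu>)" and y: "stable \<beta> \<gamma> rp rq (u', v', \<mu>')"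
  obtains A where "\<mu> ` A = \<mu>' ` A"
    and "\<forall>i\<in>A. u i \<le> u' i" and "\<forall>j\<in>\<mu> ` A. v' j \<le> v j"
    and "\<forall>i\<in>- A. u' i \<le> u i" and "\<forall>j\<in>- (\<mu> ` A). v j \<le> v' j"
proof -
  interpret matching_pair_signs \<mu> \<mu>' "\<lambda>i. u i - u' i" "\<lambda>j. v' j - v j" "\<lambda>i j. \<not> rp i \<and> \<not> rq j"
  proof
    show "bij \<mu>" "bij \<mu>'" using stable_bij x y by blast+
    fix i
    show "u i - u' i > 0 \<Longrightarrow> v' (\<mu> i) - v (\<mu> i) \<ge> 0"
      using matched_pair_no_common_gain[OF x y] by simp
    show "\<not> rp i \<and> \<not> rq (\<mu> i) \<Longrightarrow> u i - u' i \<le> v' (\<mu> i) - v (\<mu> i)"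
      using matched_flexible_pair_gain_le[OF x y] by simp
    show "v' (\<mu>' i) - v (\<mu>' i) > 0 \<Longrightarrow> u i - u' i \<ge> 0"
      using matched_pair_no_common_gain[OF y x, of i] by linarith
    show "\<not> rp i \<and> \<not> rq (\<mu>' i) \<Longrightarrow> v' (\<mu>' i) - v (\<mu>' i) \<le> u i - u' i"
      using matched_flexible_pair_gain_le[OF y x, of i] by simp
  next
    fix CP CQ
    assume "\<forall>i\<in>CP. u i - u' i = 0" "\<forall>j\<in>CQ. v' j - v j = 0"
      and "\<forall>i. (i \<in> CP) \<noteq> (\<mu> i \<in> CQ) \<longrightarrow> \<not> (\<not> rp i \<and> \<not> rq (\<mu> i))"
      and "\<forall>i. (i \<in> CP) \<noteq> (\<mu>' i \<in> CQ) \<longrightarrow> \<not> (\<not> rp i \<and> \<not> rq (\<mu>' i))"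
    then show "(\<forall>i\<in>CP. \<mu> i = \<mu>' i) \<and> (\<forall>j\<in>CQ. inv \<mu> j = inv \<mu>' j)"
      by (intro stable_agree_on_forced[OF nd x y]) (auto simp: forced_both_def forced_def)
  qed
  from sign_separating_set that show thesis by auto
qed

lemma stable_sup_exists:
  fixes \<beta> \<gamma> :: "'n::finite \<Rightarrow> 'n \<Rightarrow> real"
  assumes nd: "non_degenerate \<beta> \<gamma> rp rq"
    and x: "stable \<beta> \<gamma> rp rq (u, v, \<mu>)" and y: "stable \<beta> \<gamma> rp rq (u', v', \<mu>')"
  shows "\<exists>\<nu>. stable \<beta> \<gamma> rp rq (\<lambda>i. max (u i) (u' i), \<lambda>j. min (v j) (v' j), \<nu>)"
proof -
  obtain A where A: "\<mu> ` A = \<mu>' ` A"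
    "\<forall>i\<in>A. u i \<le> u' i" "\<forall>j\<in>\<mu> ` A. v' j \<le> v j"
    "\<forall>i\<in>- A. u' i \<le> u i" "\<forall>j\<in>- (\<mu> ` A). v j \<le> v' j"
    using stable_sign_separating_set[OF nd x y] .
  have inj: "inj \<mu>" "inj \<mu>'" using stable_bij x y bij_is_inj by blast+
  have "stable \<beta> \<gamma> rp rq (\<lambda>i. max (u i) (u' i), \<lambda>j. min (v j) (v' j), \<lambda>i. if i \<in> A then \<mu>' i else \<mu> i)"
  proof (rule stable_recombine[OF x y])
    show "bij (\<lambda>i. if i \<in> A then \<mu>' i else \<mu> i)"
      using bij_if_image_eq[OF stable_bij[OF y] stable_bij[OF x] A(1)[symmetric]] .
    show "(u i \<le> max (u i) (u' i) \<and> v j \<le> min (v j) (v' j)) \<or>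
      (u' i \<le> max (u i) (u' i) \<and> v' j \<le> min (v j) (v' j))" for i j
      by (cases "v j \<le> v' j") auto
    show "((if i \<in> A then \<mu>' i else \<mu> i) = \<mu> i \<and> max (u i) (u' i) = u i \<and> min (v (\<mu> i)) (v' (\<mu> i)) = v (\<mu> i)) \<or>
      ((if i \<in> A then \<mu>' i else \<mu> i) = \<mu>' i \<and> max (u i) (u' i) = u' i \<and> min (v (\<mu>' i)) (v' (\<mu>' i)) = v' (\<mu>' i))" for i
    proof (cases "i \<in> A")
      case True
      then have "\<mu>' i \<in> \<mu> ` A" using A(1) by blast
      with True A(2,3) show ?thesis by auto
    next
      case False
      then have "\<mu> i \<in> - (\<mu> ` A)" using inj(1) by (simp add: inj_image_mem_iff)
      with False A(4,5) show ?thesis by auto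
    qed
  qed
  then show ?thesis by blast
qed

lemma stable_inf_exists:
  fixes \<beta> \<gamma> :: "'n::finite \<Rightarrow> 'n \<Rightarrow> real"
  assumes nd: "non_degenerate \<beta> \<gamma> rp rq"
    and x: "stable \<beta> \<gamma> rp rq (u, v, \<mu>)" and y: "stable \<beta> \<gamma> rp rq (u', v', \<mu>')"
  shows "\<exists>\<nu>. stable \<beta> \<gamma> rp rq (\<lambda>i. min (u i) (u' i), \<lambda>j. max (v j) (v' j), \<nu>)"
proof -
  obtain A where A: "\<mu> ` A = \<mu>' ` A"
    "\<forall>i\<in>A. u i \<le> u' i" "\<forall>j\<in>\<mu> ` A. v' j \<le> v j"
    "\<forall>i\<in>- A. u' i \<le> u i" "\<forall>j\<in>- (\<mu> ` A). v j \<le> v' j"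
    using stable_sign_separating_set[OF nd x y] .
  have "stable \<beta> \<gamma> rp rq (\<lambda>i. min (u i) (u' i), \<lambda>j. max (v j) (v' j), \<lambda>i. if i \<in> A then \<mu> i else \<mu>' i)"
  proof (rule stable_recombine[OF x y])
    show "bij (\<lambda>i. if i \<in> A then \<mu> i else \<mu>' i)"
      using bij_if_image_eq[OF stable_bij[OF x] stable_bij[OF y] A(1)] .
    show "(u i \<le> min (u i) (u' i) \<and> v j \<le> max (v j) (v' j)) \<or>
      (u' i \<le> min (u i) (u' i) \<and> v' j \<le> max (v j) (v' j))" for i j
      by (cases "u i \<le> u' i") auto
    show "((if i \<in> A then \<mu> i else \<mu>' i) = \<mu> i \<and> min (u i) (u' i) = u i \<and> max (v (\<mu> i)) (v' (\<mu> i)) = v (\<mu> i)) \<or>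
      ((if i \<in> A then \<mu> i else \<mu>' i) = \<mu>' i \<and> min (u i) (u' i) = u' i \<and> max (v (\<mu>' i)) (v' (\<mu>' i)) = v' (\<mu>' i))" for i
    proof (cases "i \<in> A")
      case True
      with A(2,3) show ?thesis by auto
    next
      case False
      have "inj \<mu>'" using stable_bij[OF y] by (rule bij_is_inj)
      with False have "\<mu>' i \<in> - (\<mu> ` A)" by (simp add: A(1) inj_image_mem_iff)
      with False A(4,5) show ?thesis by auto
    qed
  qed
  then show ?thesis by blast
qed

theorem theorem2:
  fixes \<beta> \<gamma> :: "'n::finite \<Rightarrow> 'n \<Rightarrow> real" and rp rq :: "'n \<Rightarrow> bool"
  assumes "rifle_game \<beta> \<gamma>"
    and "non_degenerate \<beta> \<gamma> rp rq"
  shows "is_lattice_under {x. stable \<beta> \<gamma> rp rq x} geP"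
  unfolding is_lattice_under_def
proof (intro ballI conjI)
  fix x y assume "x \<in> {x. stable \<beta> \<gamma> rp rq x}" "y \<in> {x. stable \<beta> \<gamma> rp rq x}"
  then obtain u v \<mu> u' v' \<mu>' where x: "x = (u, v, \<mu>)" "stable \<beta> \<gamma> rp rq (u, v, \<mu>)"
    and y: "y = (u', v', \<mu>')" "stable \<beta> \<gamma> rp rq (u', v', \<mu>')"
    by (metis mem_Collect_eq prod_cases3)
  obtain \<nu> where "stable \<beta> \<gamma> rp rq (\<lambda>i. max (u i) (u' i), \<lambda>j. min (v j) (v' j), \<nu>)"
    using stable_sup_exists[OF assms(2) x(2) y(2)] by blast
  then show "\<exists>z\<in>{x. stable \<beta> \<gamma> rp rq x}. geP z x \<and> geP z y \<and>
      (\<forall>w\<in>{x. stable \<beta> \<gamma> rp rq x}. geP w x \<and> geP w y \<longrightarrow> geP w z)"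
    by (intro bexI[where x = "(\<lambda>i. max (u i) (u' i), \<lambda>j. min (v j) (v' j), \<nu>)"])
      (auto simp: x(1) y(1) geP_def split: prod.splits)
  obtain \<nu>' where "stable \<beta> \<gamma> rp rq (\<lambda>i. min (u i) (u' i), \<lambda>j. max (v j) (v' j), \<nu>')"
    using stable_inf_exists[OF assms(2) x(2) y(2)] by blast
  then show "\<exists>z\<in>{x. stable \<beta> \<gamma> rp rq x}. geP x z \<and> geP y z \<and>
      (\<forall>w\<in>{x. stable \<beta> \<gamma> rp rq x}. geP x w \<and> geP y w \<longrightarrow> geP z w)"
    by (intro bexI[where x = "(\<lambda>i. min (u i) (u' i), \<lambda>j. max (v j) (v' j), \<nu>')"])
      (auto simp: x(1) y(1) geP_def split: prod.splits)
qed

end
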